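(* Let $\mathcal{K}$ be a consistent statistical $\mathcal{ALC}$ knowledge base and $C, D$ $\mathcal{ALC}$ concepts. Then: (1) for all rationals $0 \le \ell \le u \le 1$: $\mathcal{K} \models_l (C \mid D)[\ell,u]$ iff $\{\kappa \in \mathcal{K} \mid \kappa \rightleftharpoons^* (C \mid D)[\ell,u]\} \models_l (C \mid D)[\ell,u]$; (2) for all $m, M$: $\mathcal{K} \models_p (C \mid D)[m,M]$ iff $\{\kappa \in \mathcal{K} \mid \kappa \rightleftharpoons^* (C \mid D)\} \models_p (C \mid D)[m,M]$.
   Context: $\mathcal{ALC}$ concepts over disjoint sets $N_C$, $N_R$: $C ::= \top \mid A \mid \neg C \mid C \sqcap C \mid \exists r.C$, standard semantics. Interpretations $\mathcal{I} = (\Delta^{\mathcal{I}}, \cdot^{\mathcal{I}})$ have non-empty finite domain; $[X]^{\mathcal{I}} := |X^{\mathcal{I}}|$. A conditional is $(C \mid D)[\ell,u]$ with concepts $C,D$ and rationals $0 \le \ell \le u \le 1$; $\mathcal{I} \models (C \mid D)[\ell,u]$ iff $[D]^{\mathcal{I}} = 0$ or $[C \sqcap D]^{\mathcal{I}}/[D]^{\mathcal{I}} \in [\ell,u]$. A statistical $\mathcal{ALC}$ knowledge base $\mathcal{K}$ is a finite set of conditionals; $\mathrm{Mod}(\mathcal{K})$ is its set of finite models; consistent means $\mathrm{Mod}(\mathcal{K}) \ne \emptyset$. $\mathcal{K} \models_l (C\mid D)[\ell,u]$ iff every model of $\mathcal{K}$ satisfies $(C\mid D)[\ell,u]$. A query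 is an expression $(C \mid D)$. $\mathcal{K} \models_p (C \mid D)[m,M]$ means: some $\mathcal{I} \in \mathrm{Mod}(\mathcal{K})$ has $[D]^{\mathcal{I}} > 0$, and $m$, $M$ are respectively the infimum and supremum of $[C \sqcap D]^{\mathcal{I}}/[D]^{\mathcal{I}}$ over all $\mathcal{I} \in \mathrm{Mod}(\mathcal{K})$ with $[D]^{\mathcal{I}} > 0$. For a concept $C$, $\mathrm{Sig}(C)$ is the set of concept and role names occurring in $C$; the signature of a conditional $(C\mid D)[\ell,u]$ or a query $(C \mid D)$ is $\mathrm{Sig}(C) \cup \mathrm{Sig}(D)$. Two conditionals/queries are directly connected ($\rightleftharpoons$) iff their signatures intersect; $\rightleftharpoons^*$ is the transitive closure of $\rightleftharpoons$ (taken over the conditionals of $\mathcal{K}$ together with the given conditional or query), so $\kappa \rightleftharpoons^* q$ means there is a chain from $\kappa$ to $q$ of consecutive directly connected elements. *)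

theory Defs
  imports Complex_Main
begin

datatype ('c, 'r) concept =
    Top
  | Atom 'c
  | Neg "('c, 'r) concept"
  | And "('c, 'r) concept" "('c, 'r) concept"
  | Ex 'r "('c, 'r) concept"

text \<open>Interpretations. Every finite interpretation is isomorphic to one whose
domain is a finite subset of nat, so we take nat as the universe of individuals.\<close>

record ('c, 'r) interp =
  dom  :: "nat set"
  cint :: "'c \<Rightarrow> nat set"
  rint :: "'r \<Rightarrow> (nat \<times> nat) set"

definition wf_interp :: "('c, 'r) interp \<Rightarrow> bool" where
  "wf_interp I \<longleftrightarrow> finite (dom I) \<and> dom I \<noteq> {}
     \<and> (\<forall>A. cint I A \<subseteq> dom I) \<and> (\<forall>r. rint I r \<subseteq> dom I \<times> dom I)"

fun ext :: "('c, 'r) interp \<Rightarrow> ('c, 'r) concept \<Rightarrow> nat set" where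
  "ext I Top = dom I"
| "ext I (Atom A) = cint I A"
| "ext I (Neg C) = dom I - ext I C"
| "ext I (And C D) = ext I C \<inter> ext I D"
| "ext I (Ex r C) = {x \<in> dom I. \<exists>y. (x, y) \<in> rint I r \<and> y \<in> ext I C}"

definition cnt :: "('c, 'r) interp \<Rightarrow> ('c, 'r) concept \<Rightarrow> nat" where
  "cnt I X = card (ext I X)"

text \<open>A conditional (C | D)[l,u] is represented as the tuple (C, D, l, u).\<close>
type_synonym ('c, 'r) cond = "('c, 'r) concept \<times> ('c, 'r) concept \<times> rat \<times> rat"

definition valid_bounds :: "('c, 'r) cond \<Rightarrow> bool" where
  "valid_bounds k = (case k of (C, D, l, u) \<Rightarrow> 0 \<le> l \<and> l \<le> u \<and> u \<le> 1)"

definition ratio :: "('c, 'r) interp \<Rightarrow> ('c, 'r) concept \<Rightarrow> ('c, 'r) concept \<Rightarrow> real" where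
  "ratio I C D = real (cnt I (And C D)) / real (cnt I D)"

definition sat :: "('c, 'r) interp \<Rightarrow> ('c, 'r) cond \<Rightarrow> bool" where
  "sat I k = (case k of (C, D, l, u) \<Rightarrow>
      cnt I D = 0 \<or> (real_of_rat l \<le> ratio I C D \<and> ratio I C D \<le> real_of_rat u))"

definition is_KB :: "('c, 'r) cond set \<Rightarrow> bool" where
  "is_KB K \<longleftrightarrow> finite K \<and> (\<forall>k\<in>K. valid_bounds k)"

definition Mod :: "('c, 'r) cond set \<Rightarrow> ('c, 'r) interp set" where
  "Mod K = {I. wf_interp I \<and> (\<forall>k\<in>K. sat I k)}"

definition consistent :: "('c, 'r) cond set \<Rightarrow> bool" where
  "consistent K \<longleftrightarrow> Mod K \<noteq> {}"

definition entails_l :: "('c, 'r) cond set \<Rightarrow> ('c, 'r) cond \<Rightarrow> bool" where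
  "entails_l K k \<longleftrightarrow> (\<forall>I\<in>Mod K. sat I k)"

definition entails_p :: "('c, 'r) cond set \<Rightarrow> ('c, 'r) concept \<Rightarrow> ('c, 'r) concept
    \<Rightarrow> real \<Rightarrow> real \<Rightarrow> bool" where
  "entails_p K C D m M \<longleftrightarrow>
     (\<exists>I\<in>Mod K. cnt I D > 0) \<and>
     m = Inf {ratio I C D | I. I \<in> Mod K \<and> cnt I D > 0} \<and>
     M = Sup {ratio I C D | I. I \<in> Mod K \<and> cnt I D > 0}"

fun csig :: "('c, 'r) concept \<Rightarrow> ('c + 'r) set" where
  "csig Top = {}"
| "csig (Atom A) = {Inl A}"
| "csig (Neg C) = csig C"
| "csig (And C D) = csig C \<union> csig D"
| "csig (Ex r C) = {Inr r} \<union> csig C"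

definition qsig :: "('c, 'r) concept \<Rightarrow> ('c, 'r) concept \<Rightarrow> ('c + 'r) set" where
  "qsig C D = csig C \<union> csig D"

definition ksig :: "('c, 'r) cond \<Rightarrow> ('c + 'r) set" where
  "ksig k = (case k of (C, D, l, u) \<Rightarrow> qsig C D)"

text \<open>Items are the conditionals of K together with the query/conditional q,
  tagged Inl (conditional of K) / Inr () (the query q). Two items are directly
  connected iff their signatures intersect; \<rightleftharpoons>* is the transitive closure.\<close>

definition item_sig :: "('c, 'r) cond set \<Rightarrow> ('c + 'r) set \<Rightarrow> (('c, 'r) cond + unit) \<Rightarrow> ('c + 'r) set" where
  "item_sig K s x = (case x of Inl k \<Rightarrow> ksig k | Inr _ \<Rightarrow> s)"

definition direct_conn :: "('c, 'r) cond set \<Rightarrow> ('c + 'r) set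
    \<Rightarrow> ((('c, 'r) cond + unit) \<times> (('c, 'r) cond + unit)) set" where
  "direct_conn K s = {(x, y). x \<in> Inl ` K \<union> {Inr ()} \<and> y \<in> Inl ` K \<union> {Inr ()}
      \<and> item_sig K s x \<inter> item_sig K s y \<noteq> {}}"

definition conn :: "('c, 'r) cond set \<Rightarrow> ('c + 'r) set \<Rightarrow> ('c, 'r) cond \<Rightarrow> bool" where
  "conn K s k \<longleftrightarrow> (Inl k, Inr ()) \<in> (direct_conn K s)\<^sup>+"

end

theory Submission
  imports Defs "HOL-Library.Nat_Bijection"
begin

text \<open>Let \<open>S\<close> be the joint signature of the conditionals not connected to the query.
  Given a model \<open>I\<close> of the connected part and any model \<open>J\<close> of \<open>K\<close>, interpret the
  symbols of \<open>S\<close> on \<open>dom I \<times> dom J\<close> through the second factor and all other symbols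
  through the first. A concept over the complement of \<open>S\<close> then has extension
  \<open>ext I X \<times> dom J\<close>, a concept over \<open>S\<close> has extension \<open>dom I \<times> ext J X\<close>, so all
  conditional frequencies are those of \<open>I\<close> resp. \<open>J\<close>. Every conditional of \<open>K\<close> is of
  one of the two kinds, hence the product is a model of \<open>K\<close> that answers the query
  exactly as \<open>I\<close> does.\<close>

text \<open>Pairs are coded into \<open>nat\<close> by \<open>prod_encode\<close>, since individuals are naturals.\<close>
definition prod_interp ::
    "('c, 'r) interp \<Rightarrow> ('c, 'r) interp \<Rightarrow> ('c + 'r) set \<Rightarrow> ('c, 'r) interp" where
  "prod_interp I J S = \<lparr>dom = prod_encode ` (dom I \<times> dom J),
     cint = (\<lambda>A. if Inl A \<in> S then prod_encode ` (dom I \<times> cint J A)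
                 else prod_encode ` (cint I A \<times> dom J)),
     rint = (\<lambda>r. if Inr r \<in> S
                 then {(prod_encode (a, b), prod_encode (a, b')) | a b b'. a \<in> dom I \<and> (b, b') \<in> rint J r}
                 else {(prod_encode (a, b), prod_encode (a', b)) | a a' b. (a, a') \<in> rint I r \<and> b \<in> dom J})\<rparr>"

lemma ext_subset_dom: "wf_interp I \<Longrightarrow> ext I C \<subseteq> dom I"
  by (induction C) (auto simp: wf_interp_def)

lemma prod_encode_eq_iff [simp]: "prod_encode x = prod_encode y \<longleftrightarrow> x = y"
  using inj_prod_encode by (auto dest: injD)

lemma card_prod_encode_Times: "card (prod_encode ` (A \<times> B)) = card A * card B"
  by (simp add: card_image inj_on_def card_cartesian_product)

lemma wf_interp_prod_interp: "wf_interp I \<Longrightarrow> wf_interp J \<Longrightarrow> wf_interp (prod_interp I J S)"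
  unfolding wf_interp_def prod_interp_def by (auto 0 4 intro!: imageI)

lemma ext_prod_interp_outside:
  "wf_interp I \<Longrightarrow> wf_interp J \<Longrightarrow> csig C \<inter> S = {} \<Longrightarrow>
   ext (prod_interp I J S) C = prod_encode ` (ext I C \<times> dom J)"
proof (induction C)
  case (Neg C)
  then show ?case using ext_subset_dom[OF Neg.prems(1), of C] by (auto simp: prod_interp_def)
next
  case (And C1 C2)
  then have "csig C1 \<inter> S = {}" "csig C2 \<inter> S = {}" by auto
  with And show ?case by auto
next
  case (Ex r C)
  have ext_in_dom: "ext I C \<subseteq> dom I" using ext_subset_dom[OF Ex.prems(1)] .
  from Ex show ?case using ext_in_dom by (auto simp: prod_interp_def wf_interp_def) (blast+)
qed (auto simp: prod_interp_def)

lemma ext_prod_interp_inside: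
  "wf_interp I \<Longrightarrow> wf_interp J \<Longrightarrow> csig C \<subseteq> S \<Longrightarrow>
   ext (prod_interp I J S) C = prod_encode ` (dom I \<times> ext J C)"
proof (induction C)
  case (Neg C)
  then show ?case using ext_subset_dom[OF Neg.prems(2), of C] by (auto simp: prod_interp_def)
next
  case (And C1 C2)
  then have "csig C1 \<subseteq> S" "csig C2 \<subseteq> S" by auto
  with And show ?case by auto
next
  case (Ex r C)
  have ext_in_dom: "ext J C \<subseteq> dom J" using ext_subset_dom[OF Ex.prems(2)] .
  from Ex show ?case using ext_in_dom by (auto simp: prod_interp_def wf_interp_def) (blast+)
qed (auto simp: prod_interp_def)

lemma cnt_prod_interp_outside:
  "wf_interp I \<Longrightarrow> wf_interp J \<Longrightarrow> csig X \<inter> S = {} \<Longrightarrow>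
   cnt (prod_interp I J S) X = card (dom J) * cnt I X"
  by (simp add: cnt_def ext_prod_interp_outside card_prod_encode_Times)

lemma cnt_prod_interp_inside:
  "wf_interp I \<Longrightarrow> wf_interp J \<Longrightarrow> csig X \<subseteq> S \<Longrightarrow>
   cnt (prod_interp I J S) X = card (dom I) * cnt J X"
  by (simp add: cnt_def ext_prod_interp_inside card_prod_encode_Times)

lemma card_dom_pos: "wf_interp I \<Longrightarrow> card (dom I) > 0"
  by (simp add: wf_interp_def card_gt_0_iff)

lemma ratio_scaled_cnt:
  assumes "n > 0" "cnt P (And C D) = n * cnt I (And C D)" "cnt P D = n * cnt I D"
  shows "ratio P C D = ratio I C D"
  using assms by (simp add: ratio_def)

lemma sat_cong_ratio:
  assumes "ratio P C D = ratio I C D" "cnt P D = 0 \<longleftrightarrow> cnt I D = 0"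
  shows "sat P (C, D, l, u) \<longleftrightarrow> sat I (C, D, l, u)"
  using assms by (simp add: sat_def)

lemma ratio_prod_interp_outside:
  assumes "wf_interp I" "wf_interp J" "qsig C D \<inter> S = {}"
  shows "ratio (prod_interp I J S) C D = ratio I C D"
    and "cnt (prod_interp I J S) D = 0 \<longleftrightarrow> cnt I D = 0"
proof -
  have "csig (And C D) \<inter> S = {}" "csig D \<inter> S = {}" using assms(3) by (auto simp: qsig_def)
  then show "ratio (prod_interp I J S) C D = ratio I C D"
    and "cnt (prod_interp I J S) D = 0 \<longleftrightarrow> cnt I D = 0"
    using card_dom_pos[OF assms(2)]
    by (simp_all add: cnt_prod_interp_outside[OF assms(1,2)] ratio_scaled_cnt)
qed

lemma ratio_prod_interp_inside:
  assumes "wf_interp I" "wf_interp J" "qsig C D \<subseteq> S"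
  shows "ratio (prod_interp I J S) C D = ratio J C D"
    and "cnt (prod_interp I J S) D = 0 \<longleftrightarrow> cnt J D = 0"
proof -
  have "csig (And C D) \<subseteq> S" "csig D \<subseteq> S" using assms(3) by (auto simp: qsig_def)
  then show "ratio (prod_interp I J S) C D = ratio J C D"
    and "cnt (prod_interp I J S) D = 0 \<longleftrightarrow> cnt J D = 0"
    using card_dom_pos[OF assms(1)]
    by (simp_all add: cnt_prod_interp_inside[OF assms(1,2)] ratio_scaled_cnt)
qed

lemma not_conn_disjoint_query:
  assumes "k \<in> K" "\<not> conn K s k"
  shows "ksig k \<inter> s = {}"
proof (rule ccontr)
  assume "ksig k \<inter> s \<noteq> {}"
  then have "(Inl k, Inr ()) \<in> direct_conn K s"
    using assms(1) by (auto simp: direct_conn_def item_sig_def)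
  then show False using assms(2) by (auto simp: conn_def)
qed

lemma not_conn_disjoint_conn:
  assumes "k \<in> K" "\<not> conn K s k" "k' \<in> K" "conn K s k'"
  shows "ksig k \<inter> ksig k' = {}"
proof (rule ccontr)
  assume "ksig k \<inter> ksig k' \<noteq> {}"
  then have "(Inl k, Inl k') \<in> direct_conn K s"
    using assms(1,3) by (auto simp: direct_conn_def item_sig_def)
  then have "conn K s k"
    using assms(4) by (auto simp: conn_def intro: trancl_into_trancl2)
  then show False using assms(2) by simp
qed

lemma sat_if_Mod: "I \<in> Mod K \<Longrightarrow> k \<in> K \<Longrightarrow> sat I k"
  by (simp add: Mod_def)

lemma model_of_connected_part_extends:
  fixes K :: "('c, 'r) cond set" and C D :: "('c, 'r) concept"
  assumes "consistent K" and I: "I \<in> Mod {k \<in> K. conn K (qsig C D) k}"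
  shows "\<exists>P \<in> Mod K. ratio P C D = ratio I C D \<and> (cnt P D = 0 \<longleftrightarrow> cnt I D = 0)"
proof -
  let ?s = "qsig C D"
  define S where "S = (\<Union>k \<in> {k \<in> K. \<not> conn K ?s k}. ksig k)"
  obtain J where J: "J \<in> Mod K" using assms(1) by (auto simp: consistent_def)
  have wI: "wf_interp I" and wJ: "wf_interp J" using I J by (auto simp: Mod_def)
  have query_outside: "?s \<inter> S = {}"
    using not_conn_disjoint_query by (fastforce simp: S_def)
  have "prod_interp I J S \<in> Mod K"
    unfolding Mod_def
  proof (intro CollectI conjI ballI)
    show "wf_interp (prod_interp I J S)" using wf_interp_prod_interp[OF wI wJ] .
    fix k assume k: "k \<in> K"
    obtain C' D' l u where k_eq: "k = (C', D', l, u)" by (cases k)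
    show "sat (prod_interp I J S) k"
    proof (cases "conn K ?s k")
      case True
      then have "ksig k' \<inter> ksig k = {}" if "k' \<in> K" "\<not> conn K ?s k'" for k'
        using not_conn_disjoint_conn that k by blast
      then have "ksig k \<inter> S = {}" unfolding S_def by blast
      then have "qsig C' D' \<inter> S = {}" by (simp add: k_eq ksig_def)
      note same = sat_cong_ratio[OF ratio_prod_interp_outside[OF wI wJ this]]
      have "sat I k" using sat_if_Mod[OF I] k True by simp
      then show ?thesis unfolding k_eq same .
    next
      case False
      then have "qsig C' D' \<subseteq> S" using k by (auto simp: S_def k_eq ksig_def)
      note same = sat_cong_ratio[OF ratio_prod_interp_inside[OF wI wJ this]]
      show ?thesis using sat_if_Mod[OF J k] unfolding k_eq same .
    qed
  qed
  then show ?thesis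
    using ratio_prod_interp_outside[OF wI wJ query_outside] by (intro bexI[of _ "prod_interp I J S"]) simp_all
qed

lemma entails_l_eq_if_models_extend:
  assumes sub: "Mod K \<subseteq> Mod K'"
    and extend: "\<And>I. I \<in> Mod K' \<Longrightarrow>
                   \<exists>P \<in> Mod K. ratio P C D = ratio I C D \<and> (cnt P D = 0 \<longleftrightarrow> cnt I D = 0)"
  shows "entails_l K (C, D, l, u) \<longleftrightarrow> entails_l K' (C, D, l, u)"
proof
  assume entails: "entails_l K (C, D, l, u)"
  show "entails_l K' (C, D, l, u)"
    unfolding entails_l_def
  proof
    fix I assume "I \<in> Mod K'"
    then obtain P where P: "P \<in> Mod K" "ratio P C D = ratio I C D" "cnt P D = 0 \<longleftrightarrow> cnt I D = 0"
      by (metis extend)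
    from entails P(1) have "sat P (C, D, l, u)" by (simp add: entails_l_def)
    with sat_cong_ratio[OF P(2,3)] show "sat I (C, D, l, u)" by simp
  qed
next
  assume "entails_l K' (C, D, l, u)"
  then show "entails_l K (C, D, l, u)" using sub by (simp add: entails_l_def subset_iff)
qed

lemma ratios_subset_if_models_extend:
  assumes "\<And>I. I \<in> Mod K' \<Longrightarrow> cnt I D > 0 \<Longrightarrow>
             \<exists>P. P \<in> Mod K \<and> cnt P D > 0 \<and> ratio P C D = ratio I C D"
  shows "{ratio I C D | I. I \<in> Mod K' \<and> cnt I D > 0} \<subseteq> {ratio I C D | I. I \<in> Mod K \<and> cnt I D > 0}"
proof
  fix x assume "x \<in> {ratio I C D | I. I \<in> Mod K' \<and> cnt I D > 0}"
  then obtain I where "I \<in> Mod K'" "cnt I D > 0" "x = ratio I C D" by blast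
  with assms obtain P where "P \<in> Mod K" "cnt P D > 0" "ratio P C D = x" by metis
  then show "x \<in> {ratio I C D | I. I \<in> Mod K \<and> cnt I D > 0}" by blast
qed

lemma entails_p_eq_if_models_extend:
  assumes sub: "Mod K \<subseteq> Mod K'"
    and extend: "\<And>I. I \<in> Mod K' \<Longrightarrow>
                   \<exists>P \<in> Mod K. ratio P C D = ratio I C D \<and> (cnt P D = 0 \<longleftrightarrow> cnt I D = 0)"
  shows "entails_p K C D m M \<longleftrightarrow> entails_p K' C D m M"
proof -
  have extend_pos: "\<exists>P. P \<in> Mod K \<and> cnt P D > 0 \<and> ratio P C D = ratio I C D"
    if "I \<in> Mod K'" "cnt I D > 0" for I
    using extend[OF that(1)] that(2) by auto
  have sub_pos: "\<exists>P. P \<in> Mod K' \<and> cnt P D > 0 \<and> ratio P C D = ratio I C D"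
    if "I \<in> Mod K" "cnt I D > 0" for I
    using subsetD[OF sub that(1)] that(2) by auto
  have "{ratio I C D | I. I \<in> Mod K \<and> cnt I D > 0}
      = {ratio I C D | I. I \<in> Mod K' \<and> cnt I D > 0}"
    by (intro equalityI ratios_subset_if_models_extend sub_pos extend_pos)
  moreover have "(\<exists>I \<in> Mod K. cnt I D > 0) \<longleftrightarrow> (\<exists>I \<in> Mod K'. cnt I D > 0)"
    using extend_pos sub_pos by metis
  ultimately show ?thesis
    unfolding entails_p_def by simp
qed

theorem proposition4:
  fixes K :: "('c, 'r) cond set" and C D :: "('c, 'r) concept"
  assumes "is_KB K" and "consistent K"
  shows "(\<forall>l u :: rat. 0 \<le> l \<and> l \<le> u \<and> u \<le> 1 \<longrightarrow>
            (entails_l K (C, D, l, u) \<longleftrightarrow>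
             entails_l {k \<in> K. conn K (qsig C D) k} (C, D, l, u)))
       \<and> (\<forall>m M :: real. entails_p K C D m M \<longleftrightarrow>
             entails_p {k \<in> K. conn K (qsig C D) k} C D m M)"
proof -
  have sub: "Mod K \<subseteq> Mod {k \<in> K. conn K (qsig C D) k}"
    by (auto simp: Mod_def)
  note extend = model_of_connected_part_extends[OF assms(2)]
  show ?thesis
    by (simp add: entails_l_eq_if_models_extend[OF sub extend]
                  entails_p_eq_if_models_extend[OF sub extend])
qed

end
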